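(* Let $x,y>0$ and let $X=(x,y,x,y,\ldots)$ be the 2-periodic sequence. Then for all sufficiently large $k\in\mathbb{N}$, \[ S(X,2k,k)^{1/k}\ge S(X,2k+2,k+1)^{1/(k+1)}, \] and moreover \[ \lim_{k\to\infty}S(X,2k,k)^{1/k}=\left(\frac{x^{1/2}+y^{1/2}}{2}\right)^2. \]
   Context: For a sequence $X=(x_1,x_2,\ldots)$ of positive reals and integers $1\le k\le n$, $S(X,n,k):=\binom{n}{k}^{-1}\sum_{1\le i_1<\cdots<i_k\le n}x_{i_1}\cdots x_{i_k}$. *)

theory Defs
  imports "HOL-Analysis.Analysis"
begin

definition S :: "(nat \<Rightarrow> real) \<Rightarrow> nat \<Rightarrow> nat \<Rightarrow> real" where
  "S X n k = (\<Sum>I\<in>{I. I \<subseteq> {1..n} \<and> card I = k}. \<Prod>i\<in>I. X i) / real (n choose k)"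

definition per2 :: "real \<Rightarrow> real \<Rightarrow> nat \<Rightarrow> real" where
  "per2 x y i = (if odd i then x else y)"

end

theory Submission
  imports Defs "HOL-Computational_Algebra.Polynomial" "HOL-Real_Asymp.Real_Asymp"
begin

text \<open>
  Write x = a^2 and y = b^2. The first 2k terms of X have generating polynomial
  ((1 + a^2 t)(1 + b^2 t))^k = ((1 + a b t)^2 + (a - b)^2 t)^k, and expanding binomially gives
  S(X,2k,k) = L^k F_k(r) with L = ((a + b)/2)^2 and r = ((a - b)/(a + b))^2 in [0,1), where
  F_k(r) is the mean of the weights w_k(m) = 4^m C(2k-2m, k-m) / C(2k, k) under the binomial
  distribution Bin(k, r). Since 1 + r/2 <= F_k(r) <= 2k + 1, the k-th root of F_k(r) tends to 1,
  which gives the limit L.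

  For the monotonicity, Pascal's rule writes F_(k+1) as a Bin(k, r)-mean of w_k(m) phi(m) with
  w_k increasing and phi decreasing in m, so Chebyshev's sum inequality yields
  F_(k+1) <= F_k (1 + r^(k+1)). As (1 + r^(k+1))^k tends to 1 while F_k >= 1 + r/2, eventually
  F_(k+1)^k <= F_k^(k+1), i.e. the k-th roots decrease.
\<close>

section \<open>Elementary symmetric means as polynomial coefficients\<close>

lemma coeff_prod_linear_factors:
  fixes f :: "'i \<Rightarrow> 'a::comm_semiring_1"
  assumes "finite A"
  shows "coeff (\<Prod>i\<in>A. [:1, f i:]) k = (\<Sum>I\<in>{I. I \<subseteq> A \<and> card I = k}. \<Prod>i\<in>I. f i)"
proof -
  have monom_prod: "(\<Prod>i\<in>I. monom (f i) 1) = monom (\<Prod>i\<in>I. f i) (card I)" if "finite I" for I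
    using that by induction (simp_all add: mult_monom)
  have "(\<Prod>i\<in>A. [:1, f i:]) = (\<Prod>i\<in>A. monom (f i) 1 + 1)"
    by (intro prod.cong refl) (simp add: monom_altdef one_pCons)
  also have "\<dots> = (\<Sum>I\<in>Pow A. monom (\<Prod>i\<in>I. f i) (card I))"
    using assms by (subst prod_add) (auto intro!: sum.cong simp: monom_prod[simplified] dest: finite_subset)
  finally have "coeff (\<Prod>i\<in>A. [:1, f i:]) k = (\<Sum>I\<in>Pow A. if card I = k then \<Prod>i\<in>I. f i else 0)"
    by (simp add: coeff_sum eq_commute)
  also have "\<dots> = (\<Sum>I\<in>{I\<in>Pow A. card I = k}. \<Prod>i\<in>I. f i)"
    by (rule sum.inter_filter[symmetric]) (use assms in simp)
  also have "{I\<in>Pow A. card I = k} = {I. I \<subseteq> A \<and> card I = k}"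
    by auto
  finally show ?thesis .
qed

lemma prod_per2_linear_factors:
  "(\<Prod>i\<in>{1..2*k}. [:1, per2 x y i:]) = ([:1, x:] * [:1, y:]) ^ k"
proof (induction k)
  case (Suc k)
  have "{1..2 * Suc k} = insert (Suc (Suc (2*k))) (insert (Suc (2*k)) {1..2*k})"
    by auto
  then have "(\<Prod>i\<in>{1..2 * Suc k}. [:1, per2 x y i:]) =
               (\<Prod>i\<in>{1..2*k}. [:1, per2 x y i:]) * [:1, x:] * [:1, y:]"
    by (simp add: per2_def)
  then show ?case
    using Suc by (simp only: power_Suc mult_ac)
qed simp

lemma S_per2_central_coeff:
  "S (per2 x y) (2*k) k = coeff (([:1, x:] * [:1, y:]) ^ k) k / real (2*k choose k)"
  unfolding S_def prod_per2_linear_factors[symmetric]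
  by (simp only: coeff_prod_linear_factors[OF finite_atLeastAtMost])

lemma coeff_monom_plus_square_power:
  fixes B g :: "'a::comm_semiring_1"
  shows "coeff ((monom B 1 + [:1, g:]^2) ^ k) k =
           (\<Sum>m\<le>k. of_nat (k choose m) * B ^ m * of_nat (2*(k-m) choose (k-m)) * g ^ (k-m))"
proof -
  have "coeff ((monom B 1 + [:1, g:]^2) ^ k) k =
          (\<Sum>m\<le>k. of_nat (k choose m) * coeff (monom (B ^ m) m * [:1, g:] ^ (2 * (k - m))) k)"
    by (simp add: binomial_ring coeff_sum monom_power of_nat_poly power_mult mult.assoc)
  also have "\<dots> = (\<Sum>m\<le>k. of_nat (k choose m) * B ^ m * of_nat (2*(k-m) choose (k-m)) * g ^ (k-m))"
    by (intro sum.cong refl) (simp add: coeff_monom_mult coeff_linear_poly_power mult_ac)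
  finally show ?thesis .
qed

section \<open>Central binomial coefficients\<close>

definition central_binom :: "nat \<Rightarrow> real" where
  "central_binom n = real ((2*n) choose n)"

text \<open>The quotient C(2n+2, n+1) / C(2n, n) = 2(2n + 1)/(n + 1), written so that it is visibly
  increasing in n and below 4.\<close>
definition central_binom_ratio :: "nat \<Rightarrow> real" where
  "central_binom_ratio n = 4 - 2 / (real n + 1)"

lemma central_binom_pos: "central_binom n > 0"
  by (simp add: central_binom_def)

lemma central_binom_Suc: "central_binom (Suc n) = central_binom n * central_binom_ratio n"
proof -
  have factorials: "central_binom m = fact (2*m) / (fact m * fact m)" for m
    by (simp add: central_binom_def binomial_fact)
  show ?thesis
    unfolding factorials central_binom_ratio_def
    by (simp add: divide_simps) (simp add: algebra_simps)
qed

lemma central_binom_ratio_pos: "central_binom_ratio n > 0"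
proof -
  have "2 / (real n + 1) \<le> 2"
    by (simp add: divide_le_eq)
  then show ?thesis
    by (simp add: central_binom_ratio_def)
qed

lemma four_div_central_binom_ratio: "4 / central_binom_ratio n = 1 + 1 / (2 * real n + 1)"
  by (simp add: central_binom_ratio_def field_simps)

lemma central_binom_ratio_mono: "m \<le> n \<Longrightarrow> central_binom_ratio m \<le> central_binom_ratio n"
  by (simp add: central_binom_ratio_def frac_le)

lemma central_binom_ratio_times_Suc: "(real n + 1) * central_binom_ratio n = 2 * (2 * real n + 1)"
  by (simp add: central_binom_ratio_def field_simps)

definition central_weight :: "nat \<Rightarrow> nat \<Rightarrow> real" where
  "central_weight k m = 4 ^ m * central_binom (k - m) / central_binom k"

lemma central_weight_pos: "central_weight k m > 0"
  by (simp add: central_weight_def central_binom_pos)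

lemma central_weight_0 [simp]: "central_weight k 0 = 1"
  using central_binom_pos[of k] by (simp add: central_weight_def)

lemma central_weight_Suc_right:
  assumes "m < k"
  shows "central_weight k (Suc m) = central_weight k m * (4 / central_binom_ratio (k - Suc m))"
proof -
  have "k - m = Suc (k - Suc m)"
    using assms by simp
  then show ?thesis
    using central_binom_ratio_pos[of "k - Suc m"]
    by (simp add: central_weight_def central_binom_Suc field_simps)
qed

lemma central_weight_Suc_left:
  assumes "m \<le> k"
  shows "central_weight (Suc k) m =
           central_weight k m * central_binom_ratio (k - m) / central_binom_ratio k"
proof -
  have "Suc k - m = Suc (k - m)"
    using assms by simp
  then show ?thesis
    using central_binom_pos[of k] central_binom_ratio_pos[of k]
    by (simp add: central_weight_def central_binom_Suc field_simps)
qed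

lemma central_weight_Suc_Suc:
  "central_weight (Suc k) (Suc m) = central_weight k m * 4 / central_binom_ratio k"
  using central_binom_pos[of k] central_binom_ratio_pos[of k]
  by (simp add: central_weight_def central_binom_Suc field_simps)

lemma one_le_four_div_central_binom_ratio: "1 \<le> 4 / central_binom_ratio n"
  by (simp add: four_div_central_binom_ratio)

lemma four_div_central_binom_ratio_lower:
  assumes "n < k"
  shows "1 + 1 / (2 * real k) \<le> 4 / central_binom_ratio n"
proof -
  have "1 / (2 * real k) \<le> 1 / (2 * real n + 1)"
    using assms by (intro divide_left_mono) auto
  then show ?thesis
    by (simp add: four_div_central_binom_ratio)
qed

lemma central_weight_mono:
  assumes "m \<le> m'" and "m' \<le> k"
  shows "central_weight k m \<le> central_weight k m'"
  using assms
proof (induction m' rule: dec_induct)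
  case (step m')
  have "central_weight k m' \<le> central_weight k m' * (4 / central_binom_ratio (k - Suc m'))"
    using mult_left_mono[OF one_le_four_div_central_binom_ratio, of "central_weight k m'"]
      central_weight_pos[of k m'] by simp
  with step show ?case
    by (simp add: central_weight_Suc_right)
qed simp

lemma central_weight_lower:
  assumes "m \<le> k"
  shows "(1 + 1 / (2 * real k)) ^ m \<le> central_weight k m"
  using assms
proof (induction m)
  case (Suc m)
  have "1 + 1 / (2 * real k) \<le> 4 / central_binom_ratio (k - Suc m)"
    using Suc.prems by (intro four_div_central_binom_ratio_lower) simp
  then have "(1 + 1 / (2 * real k)) ^ Suc m \<le>
               central_weight k m * (4 / central_binom_ratio (k - Suc m))"
    using Suc by (subst power_Suc2, intro mult_mono) (simp_all add: less_imp_le[OF central_weight_pos])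
  with Suc.prems show ?case
    by (simp add: central_weight_Suc_right)
qed simp

lemma central_weight_upper:
  assumes "m \<le> k"
  shows "central_weight k m \<le> 2 * real k + 1"
proof (cases "k = 0")
  case False
  have "central_weight k m \<le> central_weight k k"
    using assms by (rule central_weight_mono) simp
  also have "\<dots> = 4 ^ k / central_binom k"
    by (simp add: central_weight_def central_binom_def)
  also have "\<dots> \<le> 2 * real k"
    using central_binomial_lower_bound[of k] False central_binom_pos[of k]
    by (simp add: central_binom_def field_simps)
  finally show ?thesis
    by simp
qed (use assms in simp)

section \<open>Weighted sums\<close>

lemma Chebyshev_sum_upper_weighted:
  fixes p a b :: "'i::linorder \<Rightarrow> 'a::linordered_idom"
  assumes "finite A" and nonneg: "\<And>i. i \<in> A \<Longrightarrow> 0 \<le> p i"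
    and opposite: "\<And>i j. i \<in> A \<Longrightarrow> j \<in> A \<Longrightarrow> i \<le> j \<Longrightarrow> a i \<le> a j \<and> b j \<le> b i"
  shows "(\<Sum>i\<in>A. p i) * (\<Sum>i\<in>A. p i * a i * b i) \<le> (\<Sum>i\<in>A. p i * a i) * (\<Sum>i\<in>A. p i * b i)"
proof -
  let ?S = "\<Sum>i\<in>A. \<Sum>j\<in>A. p i * p j * ((a i - a j) * (b i - b j))"
  have "?S = (\<Sum>i\<in>A. p i * a i * b i) * (\<Sum>j\<in>A. p j) + (\<Sum>i\<in>A. p i) * (\<Sum>j\<in>A. p j * a j * b j)
             - (\<Sum>i\<in>A. p i * a i) * (\<Sum>j\<in>A. p j * b j) - (\<Sum>i\<in>A. p i * b i) * (\<Sum>j\<in>A. p j * a j)"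
    unfolding sum_product by (simp add: algebra_simps sum_subtractf sum.distrib)
  then have "?S = 2 * ((\<Sum>i\<in>A. p i) * (\<Sum>i\<in>A. p i * a i * b i) - (\<Sum>i\<in>A. p i * a i) * (\<Sum>i\<in>A. p i * b i))"
    by (simp add: algebra_simps)
  moreover have "?S \<le> 0"
  proof (intro sum_nonpos)
    fix i j assume "i \<in> A" "j \<in> A"
    then have "(a i - a j) * (b i - b j) \<le> 0"
      using opposite[of i j] opposite[of j i] by (cases "i \<le> j") (auto simp: mult_le_0_iff)
    with nonneg[OF \<open>i \<in> A\<close>] nonneg[OF \<open>j \<in> A\<close>] show "p i * p j * ((a i - a j) * (b i - b j)) \<le> 0"
      by (simp add: mult_nonneg_nonpos)
  qed
  ultimately show ?thesis
    by simp
qed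

lemma Bernstein_Suc_Suc:
  "Bernstein (Suc n) (Suc k) x = x * Bernstein n k x + (1 - x) * Bernstein n (Suc k) x"
proof (cases "k < n")
  case True
  then have "n - k = Suc (n - Suc k)"
    by simp
  then show ?thesis
    by (simp add: Bernstein_def algebra_simps)
qed (simp add: Bernstein_def binomial_eq_0)

lemma sum_Bernstein_Suc:
  "(\<Sum>k\<le>Suc n. Bernstein (Suc n) k x * f k) =
     (\<Sum>k\<le>n. Bernstein n k x * ((1 - x) * f k + x * f (Suc k)))"
proof -
  have "(\<Sum>k\<le>n. Bernstein n k x * f k) = (\<Sum>k\<le>Suc n. Bernstein n k x * f k)"
    by (simp add: Bernstein_def)
  also have "\<dots> = Bernstein n 0 x * f 0 + (\<Sum>k\<le>n. Bernstein n (Suc k) x * f (Suc k))"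
    by (rule sum.atMost_Suc_shift)
  finally have shift: "(\<Sum>k\<le>n. Bernstein n k x * f k) =
                         Bernstein n 0 x * f 0 + (\<Sum>k\<le>n. Bernstein n (Suc k) x * f (Suc k))" .
  have "(\<Sum>k\<le>Suc n. Bernstein (Suc n) k x * f k) =
          Bernstein (Suc n) 0 x * f 0 + (\<Sum>k\<le>n. Bernstein (Suc n) (Suc k) x * f (Suc k))"
    by (rule sum.atMost_Suc_shift)
  also have "\<dots> = (1 - x) * (Bernstein n 0 x * f 0 + (\<Sum>k\<le>n. Bernstein n (Suc k) x * f (Suc k)))
                  + x * (\<Sum>k\<le>n. Bernstein n k x * f (Suc k))"
    using Bernstein_def[of "Suc n" 0 x] Bernstein_def[of n 0 x]
    by (simp add: Bernstein_Suc_Suc algebra_simps sum.distrib sum_subtractf sum_distrib_left)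
  also have "\<dots> = (1 - x) * (\<Sum>k\<le>n. Bernstein n k x * f k) + x * (\<Sum>k\<le>n. Bernstein n k x * f (Suc k))"
    by (simp only: shift)
  also have "\<dots> = (\<Sum>k\<le>n. Bernstein n k x * ((1 - x) * f k + x * f (Suc k)))"
    by (simp add: algebra_simps sum.distrib sum_subtractf sum_distrib_left)
  finally show ?thesis .
qed

lemma sum_Bernstein_divide:
  "(1 - x) * (\<Sum>k\<le>n. Bernstein n k x / (real (n - k) + 1)) = (1 - x ^ Suc n) / (real n + 1)"
proof -
  have "(1 - x) * (Bernstein n k x / (real (n - k) + 1)) = Bernstein (Suc n) k x / (real n + 1)"
    if "k \<le> n" for k
  proof -
    have "Suc n - k = Suc (n - k)"
      using that by simp
    moreover have "real (Suc n - k) * real (Suc n choose k) = real (Suc n) * real (n choose k)"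
      by (metis binomial_absorb_comp diff_Suc_1 of_nat_mult)
    ultimately have choose_ratio: "real (Suc n choose k) / (real n + 1) = real (n choose k) / (real (n - k) + 1)"
      by (simp add: field_simps)
    have "Bernstein (Suc n) k x / (real n + 1) =
            real (Suc n choose k) / (real n + 1) * x ^ k * (1 - x) ^ Suc (n - k)"
      using \<open>Suc n - k = Suc (n - k)\<close> by (simp add: Bernstein_def)
    then show ?thesis
      by (simp add: choose_ratio Bernstein_def)
  qed
  then have "(1 - x) * (\<Sum>k\<le>n. Bernstein n k x / (real (n - k) + 1)) =
               (\<Sum>k\<le>n. Bernstein (Suc n) k x) / (real n + 1)"
    by (simp add: sum_distrib_left sum_divide_distrib)
  also have "(\<Sum>k\<le>n. Bernstein (Suc n) k x) = 1 - x ^ Suc n"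
    using sum_Bernstein[of "Suc n" x] by (simp add: Bernstein_def)
  finally show ?thesis .
qed

section \<open>The binomial mean of the central weights\<close>

definition central_mean :: "real \<Rightarrow> nat \<Rightarrow> real" where
  "central_mean r k = (\<Sum>m\<le>k. Bernstein k m r * central_weight k m)"

lemma central_mean_lower:
  assumes "0 \<le> r" "r \<le> 1" "k \<ge> 1"
  shows "1 + r / 2 \<le> central_mean r k"
proof -
  have "1 + r / 2 = 1 + real k * (r / (2 * real k))"
    using assms by simp
  also have "\<dots> \<le> (1 + r / (2 * real k)) ^ k"
  proof (rule Bernoulli_inequality)
    have "0 \<le> r / (2 * real k)"
      using assms by simp
    then show "-1 \<le> r / (2 * real k)"
      by linarith
  qed
  also have "\<dots> = (r * (1 + 1 / (2 * real k)) + (1 - r)) ^ k"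
    by (simp add: algebra_simps)
  also have "\<dots> = (\<Sum>m\<le>k. Bernstein k m r * (1 + 1 / (2 * real k)) ^ m)"
    by (subst binomial_ring) (simp add: Bernstein_def power_mult_distrib mult_ac)
  also have "\<dots> \<le> central_mean r k"
    unfolding central_mean_def
    using assms by (intro sum_mono mult_left_mono central_weight_lower Bernstein_nonneg) simp_all
  finally show ?thesis .
qed

lemma central_mean_upper:
  assumes "0 \<le> r" "r \<le> 1"
  shows "central_mean r k \<le> 2 * real k + 1"
proof -
  have "central_mean r k \<le> (\<Sum>m\<le>k. Bernstein k m r * (2 * real k + 1))"
    unfolding central_mean_def
    using assms by (intro sum_mono mult_left_mono central_weight_upper Bernstein_nonneg) simp_all
  also have "\<dots> = 2 * real k + 1"
    by (simp flip: sum_distrib_right)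
  finally show ?thesis .
qed

lemma sum_Bernstein_central_binom_ratio:
  "(\<Sum>m\<le>k. Bernstein k m r * ((1 - r) * central_binom_ratio (k - m) + 4 * r)) =
     central_binom_ratio k + 2 * r ^ Suc k / (real k + 1)"
proof -
  have "(\<Sum>m\<le>k. Bernstein k m r * ((1 - r) * central_binom_ratio (k - m) + 4 * r)) =
          (\<Sum>m\<le>k. 4 * Bernstein k m r - 2 * ((1 - r) * (Bernstein k m r / (real (k - m) + 1))))"
    by (intro sum.cong refl) (simp add: central_binom_ratio_def field_simps)
  also have "\<dots> = 4 * (\<Sum>m\<le>k. Bernstein k m r)
                    - 2 * ((1 - r) * (\<Sum>m\<le>k. Bernstein k m r / (real (k - m) + 1)))"
    by (simp only: sum_subtractf sum_distrib_left)
  also have "\<dots> = central_binom_ratio k + 2 * r ^ Suc k / (real k + 1)"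
    by (simp only: sum_Bernstein_divide sum_Bernstein) (simp add: central_binom_ratio_def diff_divide_distrib)
  finally show ?thesis .
qed

lemma central_mean_Suc:
  "central_mean r (Suc k) =
     (\<Sum>m\<le>k. Bernstein k m r * central_weight k m *
        (((1 - r) * central_binom_ratio (k - m) + 4 * r) / central_binom_ratio k))"
  unfolding central_mean_def sum_Bernstein_Suc
  using central_binom_ratio_pos[of k] by (intro sum.cong refl)
    (simp add: central_weight_Suc_left central_weight_Suc_Suc field_simps)

lemma central_mean_Suc_le:
  assumes "0 \<le> r" "r \<le> 1"
  shows "central_mean r (Suc k) \<le> central_mean r k * (1 + r ^ Suc k)"
proof -
  define \<phi> where "\<phi> m = ((1 - r) * central_binom_ratio (k - m) + 4 * r) / central_binom_ratio k" for m
  have \<rho>: "central_binom_ratio k > 0"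
    by (rule central_binom_ratio_pos)
  have "central_mean r (Suc k) = (\<Sum>m\<le>k. Bernstein k m r * central_weight k m * \<phi> m)"
    unfolding central_mean_Suc \<phi>_def ..
  also have "\<dots> \<le> central_mean r k * (\<Sum>m\<le>k. Bernstein k m r * \<phi> m)"
  proof -
    have "\<phi> j \<le> \<phi> i" if "i \<le> j" "j \<le> k" for i j
      using that assms \<rho>
      by (auto simp: \<phi>_def intro!: divide_right_mono mult_left_mono central_binom_ratio_mono)
    then show ?thesis
      using Chebyshev_sum_upper_weighted[of "{..k}" "\<lambda>m. Bernstein k m r" "central_weight k" \<phi>]
        assms by (simp add: central_mean_def central_weight_mono Bernstein_nonneg)
  qed
  also have "(\<Sum>m\<le>k. Bernstein k m r * \<phi> m) =
               (central_binom_ratio k + 2 * r ^ Suc k / (real k + 1)) / central_binom_ratio k"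
    by (simp add: \<phi>_def sum_Bernstein_central_binom_ratio flip: sum_divide_distrib)
  also have "\<dots> = 1 + r ^ Suc k / (2 * real k + 1)"
    using \<rho> by (simp add: add_divide_distrib central_binom_ratio_times_Suc) (simp add: field_simps)
  also have "central_mean r k * (1 + r ^ Suc k / (2 * real k + 1)) \<le> central_mean r k * (1 + r ^ Suc k)"
  proof (intro mult_left_mono add_left_mono)
    have "r ^ Suc k / (2 * real k + 1) \<le> r ^ Suc k / 1"
      using assms by (intro divide_left_mono) simp_all
    then show "r ^ Suc k / (2 * real k + 1) \<le> r ^ Suc k"
      by simp
    show "0 \<le> central_mean r k"
      unfolding central_mean_def using assms
      by (intro sum_nonneg mult_nonneg_nonneg Bernstein_nonneg less_imp_le[OF central_weight_pos])
  qed
  finally show ?thesis .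
qed

section \<open>The 2-periodic sequence\<close>

lemma S_per2_squares:
  fixes a b :: real
  assumes "a + b \<noteq> 0"
  shows "S (per2 (a\<^sup>2) (b\<^sup>2)) (2*k) k = (((a + b) / 2)\<^sup>2) ^ k * central_mean (((a - b) / (a + b))\<^sup>2) k"
proof -
  define L where "L = ((a + b) / 2)\<^sup>2"
  define r where "r = ((a - b) / (a + b))\<^sup>2"
  have rL: "r * L = (a - b)\<^sup>2 / 4"
    using assms by (simp add: L_def r_def power_divide)
  have rL': "(1 - r) * L = a * b"
    by (simp add: left_diff_distrib rL) (simp add: L_def power2_eq_square field_simps)
  have factor: "[:1, a\<^sup>2:] * [:1, b\<^sup>2:] = monom ((a - b)\<^sup>2) 1 + [:1, a * b:]\<^sup>2"
    by (simp add: power2_eq_square monom_altdef algebra_simps)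
  have "S (per2 (a\<^sup>2) (b\<^sup>2)) (2*k) k =
               (\<Sum>m\<le>k. real (k choose m) * ((a - b)\<^sup>2) ^ m * central_binom (k - m) * (a * b) ^ (k - m))
               / central_binom k"
    unfolding S_per2_central_coeff factor coeff_monom_plus_square_power central_binom_def by simp
  also have "\<dots> = L ^ k * central_mean r k"
    unfolding central_mean_def sum_divide_distrib sum_distrib_left
  proof (intro sum.cong refl)
    fix m assume "m \<in> {..k}"
    then have "L ^ k = L ^ m * L ^ (k - m)"
      by (simp flip: power_add)
    then have "L ^ k * (Bernstein k m r * central_weight k m) =
                 real (k choose m) * (r * L) ^ m * ((1 - r) * L) ^ (k - m) * 4 ^ m
                   * central_binom (k - m) / central_binom k"
      by (simp add: Bernstein_def central_weight_def power_mult_distrib)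
    also have "\<dots> = real (k choose m) * ((a - b)\<^sup>2) ^ m * central_binom (k - m) * (a * b) ^ (k - m)
                      / central_binom k"
      by (simp add: rL rL' power_divide)
    finally show "real (k choose m) * ((a - b)\<^sup>2) ^ m * central_binom (k - m) * (a * b) ^ (k - m)
                    / central_binom k = L ^ k * (Bernstein k m r * central_weight k m)" ..
  qed
  finally show ?thesis
    by (simp add: L_def r_def)
qed

lemma diff_div_add_square_less_one:
  fixes a b :: real
  assumes "a > 0" "b > 0"
  shows "((a - b) / (a + b))\<^sup>2 < 1"
proof -
  have "\<bar>(a - b) / (a + b)\<bar> < 1"
    using assms by (simp add: abs_divide divide_less_eq abs_less_iff)
  then show ?thesis
    by (simp add: abs_square_less_1)
qed

section \<open>Roots and limits\<close>

lemma power_mult_powr_inverse: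
  fixes L c :: real
  assumes "L > 0" "k > 0"
  shows "(L ^ k * c) powr (1 / real k) = L * c powr (1 / real k)"
  using assms by (simp add: powr_mult powr_realpow[symmetric] powr_powr)

lemma powr_inverse_le_of_power_le:
  fixes a b :: real
  assumes "0 < a" "0 < b" "0 < m" "0 < n" "b ^ m \<le> a ^ n"
  shows "b powr (1 / real n) \<le> a powr (1 / real m)"
proof -
  have "b powr (1 / real n) = (b ^ m) powr (1 / (real m * real n))"
    using assms by (simp add: powr_realpow[symmetric] powr_powr)
  also have "\<dots> \<le> (a ^ n) powr (1 / (real m * real n))"
    using assms by (intro powr_mono2) simp_all
  also have "\<dots> = a powr (1 / real m)"
    using assms by (simp add: powr_realpow[symmetric] powr_powr)
  finally show ?thesis .
qed

lemma central_mean_root_Suc_le: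
  assumes "0 \<le> r" "r \<le> 1" "k \<ge> 1" and small: "(1 + r ^ Suc k) ^ k \<le> 1 + r / 2"
  shows "central_mean r (Suc k) powr (1 / real (Suc k)) \<le> central_mean r k powr (1 / real k)"
proof (rule powr_inverse_le_of_power_le)
  have "1 + r / 2 \<le> central_mean r k" "1 + r / 2 \<le> central_mean r (Suc k)"
    using central_mean_lower[of r] assms by simp_all
  then have F: "1 \<le> central_mean r k" "1 \<le> central_mean r (Suc k)"
    using assms by linarith+
  then show "0 < central_mean r k" "0 < central_mean r (Suc k)"
    by simp_all
  have "central_mean r (Suc k) ^ k \<le> (central_mean r k * (1 + r ^ Suc k)) ^ k"
    by (rule power_mono[OF central_mean_Suc_le]) (use F assms in simp_all)
  also have "\<dots> = central_mean r k ^ k * (1 + r ^ Suc k) ^ k"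
    by (simp add: power_mult_distrib)
  also have "\<dots> \<le> central_mean r k ^ k * central_mean r k"
    using F small central_mean_lower[of r k] assms by (intro mult_left_mono) simp_all
  finally show "central_mean r (Suc k) ^ k \<le> central_mean r k ^ Suc k"
    by (simp add: mult.commute)
qed (use assms in simp_all)

lemma eventually_one_plus_power_Suc_pow_le:
  fixes r :: real
  assumes "0 \<le> r" "r < 1"
  shows "\<forall>\<^sub>F k in sequentially. (1 + r ^ Suc k) ^ k \<le> 1 + r / 2"
proof (cases "r = 0")
  case False
  then have "r > 0"
    using assms by simp
  have "(\<lambda>k. exp (r * (real k * r ^ k))) \<longlonglongrightarrow> exp (r * 0)"
    using assms by (intro tendsto_exp tendsto_mult_left powser_times_n_limit_0) simp
  then have "\<forall>\<^sub>F k in sequentially. exp (r * (real k * r ^ k)) < 1 + r / 2"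
    by (rule order_tendstoD(2)) (use \<open>r > 0\<close> in simp)
  then show ?thesis
  proof eventually_elim
    case (elim k)
    have "(1 + r ^ Suc k) ^ k \<le> exp (r ^ Suc k) ^ k"
      using assms by (intro power_mono exp_ge_add_one_self) simp
    also have "\<dots> = exp (r * (real k * r ^ k))"
      by (simp add: exp_of_nat_mult[symmetric] mult_ac)
    finally show ?case
      using elim by simp
  qed
qed simp

lemma central_mean_root_tendsto:
  assumes "0 \<le> r" "r \<le> 1"
  shows "(\<lambda>k. central_mean r k powr (1 / real k)) \<longlonglongrightarrow> 1"
proof (rule tendsto_sandwich[OF _ _ tendsto_const])
  show "(\<lambda>k. (2 * real k + 1) powr (1 / real k)) \<longlonglongrightarrow> 1"
    by real_asymp
  have F: "1 \<le> central_mean r k" if "k \<ge> 1" for k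
    using central_mean_lower[OF assms that] assms by simp
  show "\<forall>\<^sub>F k in sequentially. 1 \<le> central_mean r k powr (1 / real k)"
    using eventually_ge_at_top[of 1] by eventually_elim (simp add: F ge_one_powr_ge_zero)
  show "\<forall>\<^sub>F k in sequentially. central_mean r k powr (1 / real k) \<le> (2 * real k + 1) powr (1 / real k)"
    using eventually_ge_at_top[of 1]
  proof eventually_elim
    case (elim k)
    then show ?case
      using F[OF elim] central_mean_upper[OF assms, of k] by (intro powr_mono2) simp_all
  qed
qed

theorem lemma4p1:
  fixes x y :: real
  assumes "x > 0" and "y > 0"
  shows "(\<forall>\<^sub>F k in sequentially.
            S (per2 x y) (2*k) k powr (1 / real k)
              \<ge> S (per2 x y) (2*k+2) (k+1) powr (1 / real (k+1)))
         \<and> (\<lambda>k. S (per2 x y) (2*k) k powr (1 / real k))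
              \<longlonglongrightarrow> ((sqrt x + sqrt y) / 2)^2"
proof -
  define L where "L = ((sqrt x + sqrt y) / 2)\<^sup>2"
  define r where "r = ((sqrt x - sqrt y) / (sqrt x + sqrt y))\<^sup>2"
  have "sqrt x + sqrt y > 0"
    using assms by (simp add: add_pos_pos)
  then have "L > 0" "0 \<le> r" "r < 1"
    using assms diff_div_add_square_less_one[of "sqrt x" "sqrt y"] by (simp_all add: L_def r_def)
  have root: "S (per2 x y) (2*k) k powr (1 / real k) = L * central_mean r k powr (1 / real k)"
    if "k \<ge> 1" for k
  proof -
    have "S (per2 x y) (2*k) k = L ^ k * central_mean r k"
      using S_per2_squares[of "sqrt x" "sqrt y" k] assms \<open>sqrt x + sqrt y > 0\<close> by (simp add: L_def r_def)
    then show ?thesis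
      using power_mult_powr_inverse[OF \<open>L > 0\<close>, of k] that by simp
  qed
  have "\<forall>\<^sub>F k in sequentially.
          S (per2 x y) (2*k+2) (k+1) powr (1 / real (k+1)) \<le> S (per2 x y) (2*k) k powr (1 / real k)"
    using eventually_one_plus_power_Suc_pow_le[OF \<open>0 \<le> r\<close> \<open>r < 1\<close>] eventually_ge_at_top[of 1]
  proof eventually_elim
    case (elim k)
    then show ?case
      using root[of k] root[of "Suc k"] central_mean_root_Suc_le[of r k] \<open>L > 0\<close> \<open>0 \<le> r\<close> \<open>r < 1\<close>
      by (simp add: mult_2_right)
  qed
  moreover have "(\<lambda>k. S (per2 x y) (2*k) k powr (1 / real k)) \<longlonglongrightarrow> L"
  proof (rule Lim_transform_eventually)
    show "(\<lambda>k. L * central_mean r k powr (1 / real k)) \<longlonglongrightarrow> L"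
      using tendsto_mult_left[OF central_mean_root_tendsto, of r L] \<open>0 \<le> r\<close> \<open>r < 1\<close> by simp
    show "\<forall>\<^sub>F k in sequentially. L * central_mean r k powr (1 / real k) = S (per2 x y) (2*k) k powr (1 / real k)"
      using eventually_ge_at_top[of 1] by eventually_elim (simp add: root)
  qed
  ultimately show ?thesis
    by (simp add: L_def)
qed

end
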